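(* Let $X$ be an integrable random variable, $N\sim\mathcal{N}(0,1)$ independent of $X$, $Y=X+N$. For $y\in\mathbb{R}$ and $k\in\mathbb{N}$ let $f(y)=\mathbb{E}[X\mid Y=y]$ and $g_k(y)=\mathbb{E}[(X-\mathbb{E}[X\mid Y])^k\mid Y=y]$, and for $\boldsymbol{\lambda}=(\lambda_2,\dots,\lambda_\ell)$ let $\boldsymbol{g}^{\boldsymbol{\lambda}}=\prod_{i=2}^\ell g_i^{\lambda_i}$. Then for every integer $r\ge2$, $$f^{(r-1)}=\sum_{\boldsymbol{\lambda}\in\Pi_r}e_{\boldsymbol{\lambda}}\,\boldsymbol{g}^{\boldsymbol{\lambda}}.$$
   Context: Conditional expectations given $Y=y$ are the smooth versions $\mathbb{E}[Z\mid Y=y]=\mathbb{E}[Ze^{-(X-y)^2/2}]/\mathbb{E}[e^{-(X-y)^2/2}]$ for $Z$ a polynomial in $X$ with $y$-dependent coefficients. $\Pi_r$ is the set of integer partitions of $r$ into parts each $\ge2$, encoded by multiplicities $\boldsymbol{\lambda}=(\lambda_2,\dots,\lambda_\ell)$ with $2\lambda_2+\dots+\ell\lambda_\ell=r$; for $m=\lambda_2+\dots+\lambda_\ell$, $c_{\boldsymbol{\lambda}}=\frac1m\binom{m}{\lambda_2,\dots,\lambda_\ell}\binom{r}{2,\dots,2;\dots;\ell,\dots,\ell}$ (the second multinomial has $\lambda_k$ entries equal to $k$) and $e_{\boldsymbol{\lambda}}=(-1)^{m-1}c_{\boldsymbol{\lambda}}$. *)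

theory Defs
  imports "HOL-Probability.Probability"
begin

text \<open>Smooth version of E[Z | Y = y] for Y = X + N, N standard normal independent of X:
  E[Z(X,y) exp(-(X-y)^2/2)] / E[exp(-(X-y)^2/2)].\<close>
definition smooth_cexp :: "'a measure \<Rightarrow> ('a \<Rightarrow> real) \<Rightarrow> (real \<Rightarrow> real \<Rightarrow> real) \<Rightarrow> real \<Rightarrow> real" where
  "smooth_cexp P X Z y =
     (\<integral>\<omega>. Z (X \<omega>) y * exp (- ((X \<omega> - y)^2) / 2) \<partial>P) / (\<integral>\<omega>. exp (- ((X \<omega> - y)^2) / 2) \<partial>P)"

definition post_mean :: "'a measure \<Rightarrow> ('a \<Rightarrow> real) \<Rightarrow> real \<Rightarrow> real" where
  "post_mean P X y = smooth_cexp P X (\<lambda>x _. x) y"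

definition post_cmom :: "'a measure \<Rightarrow> ('a \<Rightarrow> real) \<Rightarrow> nat \<Rightarrow> real \<Rightarrow> real" where
  "post_cmom P X k y = smooth_cexp P X (\<lambda>x y. (x - post_mean P X y) ^ k) y"

text \<open>Partitions of r into parts \<ge> 2, encoded by multiplicity functions lam (lam k = number of parts equal to k).\<close>
definition Pi_part :: "nat \<Rightarrow> (nat \<Rightarrow> nat) set" where
  "Pi_part r = {lam. (\<forall>k. lam k \<noteq> 0 \<longrightarrow> 2 \<le> k \<and> k \<le> r) \<and> (\<Sum>k=2..r. k * lam k) = r}"

definition part_len :: "nat \<Rightarrow> (nat \<Rightarrow> nat) \<Rightarrow> nat" where
  "part_len r lam = (\<Sum>k=2..r. lam k)"

definition part_c :: "nat \<Rightarrow> (nat \<Rightarrow> nat) \<Rightarrow> real" where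
  "part_c r lam = (1 / real (part_len r lam))
      * (fact (part_len r lam) / (\<Prod>k=2..r. fact (lam k)))
      * (fact r / (\<Prod>k=2..r. (fact k) ^ (lam k)))"

definition part_e :: "nat \<Rightarrow> (nat \<Rightarrow> nat) \<Rightarrow> real" where
  "part_e r lam = (-1) ^ (part_len r lam - 1) * part_c r lam"

end

theory Submission
  imports Defs "HOL-Computational_Algebra.Formal_Power_Series"
begin

(* Write m n y for the posterior moments E[X^n | Y = y], so that f = m 1. The posterior is the
   exponential family proportional to exp (x y - x^2/2) in its natural parameter y, hence
   m n' = m (n+1) - m n * m 1. On the exponential generating series of the central moments,
   C(t) = exp (- m 1 t) * (SUM n. m n t^n / n!), this says d/dy C = dC/dt - g_2 t C, so the cumulant
   series K = log C satisfies d/dy K = dK/dt - g_2 t: the cumulants kappa_r with r >= 2 are the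
   successive y-derivatives of kappa_2 = g_2 = f'. Thus f^(r-1) = kappa_r, and expanding
   log C = log (1 + (C - 1)) with the multinomial theorem gives kappa_r as the partition sum. *)

unbundle no vec_syntax
unbundle fps_syntax

section \<open>Coefficientwise derivatives of parametrised power series\<close>

definition has_fps_derivative :: "('a::real_normed_field \<Rightarrow> 'a fps) \<Rightarrow> 'a fps \<Rightarrow> 'a \<Rightarrow> bool" where
  "has_fps_derivative U V x \<longleftrightarrow> (\<forall>n. ((\<lambda>y. U y $ n) has_field_derivative V $ n) (at x))"

lemma has_fps_derivative_const: "has_fps_derivative (\<lambda>y. c) 0 x"
  by (simp add: has_fps_derivative_def)

lemma has_fps_derivative_diff:
  "has_fps_derivative U V x \<Longrightarrow> has_fps_derivative W V' x \<Longrightarrow>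
   has_fps_derivative (\<lambda>y. U y - W y) (V - V') x"
  by (auto simp: has_fps_derivative_def intro!: derivative_eq_intros)

lemma has_fps_derivative_mult:
  assumes "has_fps_derivative U V x" "has_fps_derivative W V' x"
  shows "has_fps_derivative (\<lambda>y. U y * W y) (V * W x + U x * V') x"
  unfolding has_fps_derivative_def
proof
  fix n
  have "((\<lambda>y. \<Sum>i=0..n. U y $ i * W y $ (n - i)) has_field_derivative
        (\<Sum>i=0..n. V $ i * W x $ (n - i) + U x $ i * V' $ (n - i))) (at x)"
    using assms unfolding has_fps_derivative_def
    by (intro DERIV_sum) (auto intro!: derivative_eq_intros)
  then show "((\<lambda>y. (U y * W y) $ n) has_field_derivative (V * W x + U x * V') $ n) (at x)"
    by (simp add: fps_mult_nth sum.distrib)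
qed

lemma has_fps_derivative_sum:
  assumes "finite A" "\<And>i. i \<in> A \<Longrightarrow> has_fps_derivative (U i) (V i) x"
  shows "has_fps_derivative (\<lambda>y. \<Sum>i\<in>A. U i y) (\<Sum>i\<in>A. V i) x"
  using assms unfolding has_fps_derivative_def
  by (auto simp: fps_sum_nth intro!: DERIV_sum)

lemma has_fps_derivative_power:
  assumes "has_fps_derivative U V x"
  shows "has_fps_derivative (\<lambda>y. U y ^ i) (of_nat i * U x ^ (i - 1) * V) x"
proof (induction i)
  case 0
  then show ?case using has_fps_derivative_const[of 1] by simp
next
  case (Suc i)
  have "has_fps_derivative (\<lambda>y. U y * U y ^ i) (V * U x ^ i + U x * (of_nat i * U x ^ (i - 1) * V)) x"
    by (rule has_fps_derivative_mult[OF assms Suc])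
  moreover have "V * U x ^ i + U x * (of_nat i * U x ^ (i - 1) * V) = of_nat (Suc i) * U x ^ i * V"
    by (cases i) (simp_all add: algebra_simps)
  ultimately show ?case by simp
qed

lemma has_fps_derivative_const_mult:
  "has_fps_derivative U V x \<Longrightarrow> has_fps_derivative (\<lambda>y. fps_const c * U y) (fps_const c * V) x"
  unfolding has_fps_derivative_def by (auto intro!: derivative_eq_intros)

lemma fps_compose_nth_truncated:
  fixes a b :: "'a::comm_ring_1 fps"
  assumes "b $ 0 = 0" "n \<le> N"
  shows "(a oo b) $ n = (\<Sum>i=0..N. fps_const (a $ i) * b ^ i) $ n"
proof -
  have "(\<Sum>i=0..N. fps_const (a $ i) * b ^ i) $ n = (\<Sum>i=0..N. a $ i * (b ^ i) $ n)"
    by (simp add: fps_sum_nth)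
  also have "\<dots> = (\<Sum>i=0..n. a $ i * (b ^ i) $ n)"
    using assms startsby_zero_power_prefix[OF assms(1)] by (intro sum.mono_neutral_right) auto
  finally show ?thesis by (simp add: fps_compose_nth)
qed

text \<open>Only finitely many coefficients of \<open>a\<close> enter each coefficient of \<open>a oo U y\<close>,
  which reduces the chain rule to the polynomial case.\<close>

lemma has_fps_derivative_compose:
  assumes U: "has_fps_derivative U V x" and U0: "\<And>y. U y $ 0 = 0"
  shows "has_fps_derivative (\<lambda>y. a oo U y) ((fps_deriv a oo U x) * V) x"
  unfolding has_fps_derivative_def
proof
  fix n
  let ?P = "\<lambda>y. \<Sum>i=0..Suc n. fps_const (a $ i) * U y ^ i"
  let ?Q = "\<Sum>i=0..n. fps_const (fps_deriv a $ i) * U x ^ i"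
  have deriv_P: "has_fps_derivative ?P (\<Sum>i=0..Suc n. fps_const (a $ i) * (of_nat i * U x ^ (i - 1) * V)) x"
    by (intro has_fps_derivative_sum has_fps_derivative_const_mult has_fps_derivative_power U) auto
  have derivative_eq: "(\<Sum>i=0..Suc n. fps_const (a $ i) * (of_nat i * U x ^ (i - 1) * V)) = ?Q * V"
  proof -
    have "(\<Sum>i=0..Suc n. fps_const (a $ i) * (of_nat i * U x ^ (i - 1) * V))
        = (\<Sum>i=0..n. fps_const (a $ Suc i) * (of_nat (Suc i) * U x ^ i * V))"
      by (subst sum.atLeast0_atMost_Suc_shift) simp
    also have "\<dots> = ?Q * V"
    proof -
      have "fps_const (fps_deriv a $ i) = of_nat (Suc i) * fps_const (a $ Suc i)" for i
        by (metis fps_const_mult fps_deriv_nth fps_of_nat Suc_eq_plus1)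
      then show ?thesis
        by (simp add: sum_distrib_left sum_distrib_right algebra_simps del: of_nat_Suc)
    qed
    finally show ?thesis .
  qed
  have compose_eq: "(a oo U y) $ n = ?P y $ n" for y
    by (rule fps_compose_nth_truncated[OF U0]) auto
  have deriv_compose_eq: "((fps_deriv a oo U x) * V) $ n = (?Q * V) $ n"
    unfolding fps_mult_nth
    by (intro sum.cong refl, subst fps_compose_nth_truncated[OF U0, of _ n]) auto
  show "((\<lambda>y. (a oo U y) $ n) has_field_derivative ((fps_deriv a oo U x) * V) $ n) (at x)"
    using deriv_P unfolding has_fps_derivative_def derivative_eq deriv_compose_eq compose_eq by blast
qed

section \<open>Powers of a power series without constant and linear term\<close>

definition Pi_part_len :: "nat \<Rightarrow> nat \<Rightarrow> nat \<Rightarrow> (nat \<Rightarrow> nat) set" where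
  "Pi_part_len N m r = {lam. (\<forall>k. lam k \<noteq> 0 \<longrightarrow> 2 \<le> k \<and> k \<le> N)
     \<and> (\<Sum>k=2..N. k * lam k) = r \<and> (\<Sum>k=2..N. lam k) = m}"

definition multinomial_term :: "(nat \<Rightarrow> 'a::field_char_0) \<Rightarrow> nat \<Rightarrow> nat \<Rightarrow> (nat \<Rightarrow> nat) \<Rightarrow> 'a" where
  "multinomial_term a N m lam = fact m / (\<Prod>k=2..N. fact (lam k)) * (\<Prod>k=2..N. a k ^ lam k)"

lemma Pi_part_len_finite: "finite (Pi_part_len N m r)"
proof -
  have "Pi_part_len N m r \<subseteq> {lam. \<forall>k. (k \<in> {2..N} \<longrightarrow> lam k \<in> {0..r}) \<and> (k \<notin> {2..N} \<longrightarrow> lam k = 0)}"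
  proof safe
    fix lam k assume lam: "lam \<in> Pi_part_len N m r" and k: "k \<in> {2..N}"
    have "lam k \<le> k * lam k" using k by simp
    also have "\<dots> \<le> (\<Sum>j=2..N. j * lam j)" using k by (intro member_le_sum) auto
    finally show "lam k \<in> {0..r}" using lam by (simp add: Pi_part_len_def)
  qed (auto simp: Pi_part_len_def)
  then show ?thesis by (rule finite_subset) (intro finite_set_of_finite_funs; simp)
qed

lemma Pi_part_len_0: "Pi_part_len N 0 r = (if r = 0 then {\<lambda>_. 0} else {})"
proof -
  have "lam \<in> Pi_part_len N 0 r \<longleftrightarrow> r = 0 \<and> lam = (\<lambda>_. 0)" for lam
  proof
    assume lam: "lam \<in> Pi_part_len N 0 r"
    then have support: "\<forall>k. lam k \<noteq> 0 \<longrightarrow> 2 \<le> k \<and> k \<le> N" and weight: "(\<Sum>k=2..N. k * lam k) = r"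
      and len: "(\<Sum>k=2..N. lam k) = 0"
      unfolding Pi_part_len_def mem_Collect_eq by blast+
    have "\<forall>k\<in>{2..N}. lam k = 0" using len by (subst (asm) sum_eq_0_iff) auto
    then have zero: "lam = (\<lambda>_. 0)" using support by (metis atLeastAtMost_iff)
    then show "r = 0 \<and> lam = (\<lambda>_. 0)" using weight by simp
  next
    assume "r = 0 \<and> lam = (\<lambda>_. 0)"
    then show "lam \<in> Pi_part_len N 0 r" unfolding Pi_part_len_def by simp
  qed
  then show ?thesis by (cases "r = 0") auto
qed

lemma sum_fun_upd_remove:
  "finite A \<Longrightarrow> k \<in> A \<Longrightarrow> (\<Sum>j\<in>A. f j ((g(k := v)) j)) = f k v + (\<Sum>j\<in>A - {k}. f j (g j))"
  by (simp add: sum.remove)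

lemma prod_fun_upd_remove:
  "finite A \<Longrightarrow> k \<in> A \<Longrightarrow> (\<Prod>j\<in>A. f j ((g(k := v)) j)) = f k v * (\<Prod>j\<in>A - {k}. f j (g j))"
  by (simp add: prod.remove)

lemma Pi_part_len_add_part:
  assumes mu: "mu \<in> Pi_part_len N m (r - i)" and i: "2 \<le> i" "i \<le> r" "r \<le> N"
  shows "mu(i := Suc (mu i)) \<in> Pi_part_len N (Suc m) r"
proof -
  have iN: "i \<in> {2..N}" using i by auto
  have "(\<Sum>k=2..N. k * (mu(i := Suc (mu i))) k) = i + (\<Sum>k=2..N. k * mu k)"
    using iN by (simp add: sum_fun_upd_remove[where f = "\<lambda>k x. k * x"] sum.remove)
  moreover have "(\<Sum>k=2..N. (mu(i := Suc (mu i))) k) = Suc (\<Sum>k=2..N. mu k)"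
    using iN by (simp add: sum_fun_upd_remove[where f = "\<lambda>k x. x"] sum.remove)
  ultimately show ?thesis using mu iN i by (auto simp: Pi_part_len_def)
qed

lemma Pi_part_len_remove_part:
  assumes lam: "lam \<in> Pi_part_len N (Suc m) r" and k: "2 \<le> k" "k \<le> N" "0 < lam k"
  shows "k \<le> r" and "lam(k := lam k - 1) \<in> Pi_part_len N m (r - k)"
proof -
  have "k * 1 \<le> k * lam k" using k by (intro mult_left_mono) auto
  also have "\<dots> \<le> (\<Sum>j=2..N. j * lam j)" using k by (intro member_le_sum) auto
  finally show "k \<le> r" using lam by (simp add: Pi_part_len_def)
  have "k * (lam k - 1) + k = k * lam k" using k by (cases "lam k") auto
  then have "(\<Sum>j=2..N. j * (lam(k := lam k - 1)) j) + k = (\<Sum>j=2..N. j * lam j)"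
    using k by (simp add: sum_fun_upd_remove[where f = "\<lambda>k x. k * x"] sum.remove)
  moreover have "(\<Sum>j=2..N. (lam(k := lam k - 1)) j) + 1 = (\<Sum>j=2..N. lam j)"
    using k by (simp add: sum_fun_upd_remove[where f = "\<lambda>k x. x"] sum.remove)
  ultimately show "lam(k := lam k - 1) \<in> Pi_part_len N m (r - k)"
    using lam by (auto simp: Pi_part_len_def)
qed

text \<open>Both sides enumerate partitions of \<open>r\<close> into \<open>Suc m\<close> parts with one marked part \<open>k\<close>;
  on the left they are listed as the part \<open>k\<close> plus a partition of \<open>r - k\<close> into \<open>m\<close> parts.\<close>

lemma sum_Pi_part_len_Suc:
  assumes "r \<le> N"
  shows "(\<Sum>i=2..r. \<Sum>mu\<in>Pi_part_len N m (r - i). F i mu)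
       = (\<Sum>lam\<in>Pi_part_len N (Suc m) r. \<Sum>k\<in>{k\<in>{2..N}. 0 < lam k}. F k (lam(k := lam k - 1)))"
proof -
  let ?S = "Sigma {2..r} (\<lambda>i. Pi_part_len N m (r - i))"
  let ?T = "Sigma (Pi_part_len N (Suc m) r) (\<lambda>lam. {k\<in>{2..N}. 0 < lam k})"
  have "(\<Sum>(i, mu)\<in>?S. F i mu) = (\<Sum>(lam, k)\<in>?T. F k (lam(k := lam k - 1)))"
    by (rule sum.reindex_bij_witness[where i = "\<lambda>(lam, k). (k, lam(k := lam k - 1))"
        and j = "\<lambda>(i, mu). (mu(i := Suc (mu i)), i)"])
      (use assms in \<open>auto intro: Pi_part_len_add_part Pi_part_len_remove_part simp del: One_nat_def\<close>)
  then show ?thesis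
    by (simp add: sum.Sigma Pi_part_len_finite)
qed

lemma multinomial_term_remove_part:
  assumes k: "k \<in> {2..N}" "0 < lam k"
  shows "of_nat (Suc m) * (a k * multinomial_term a N m (lam(k := lam k - 1)))
       = of_nat (lam k) * multinomial_term a N (Suc m) lam"
proof -
  obtain j where j: "lam k = Suc j" using k(2) gr0_implies_Suc by blast
  define F where "F = (\<Prod>i\<in>{2..N} - {k}. fact (lam i) :: 'a)"
  define A where "A = (\<Prod>i\<in>{2..N} - {k}. a i ^ lam i)"
  have "F \<noteq> 0" by (simp add: F_def)
  moreover have "(\<Prod>i=2..N. fact ((lam(k := j)) i) :: 'a) = fact j * F"
    unfolding F_def by (rule prod_fun_upd_remove) (use k in auto)
  moreover have "(\<Prod>i=2..N. a i ^ (lam(k := j)) i) = a k ^ j * A"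
    unfolding A_def by (rule prod_fun_upd_remove) (use k in auto)
  ultimately have term_m: "multinomial_term a N m (lam(k := j)) = fact m / (fact j * F) * (a k ^ j * A)"
    unfolding multinomial_term_def by simp
  have term_Suc_m: "multinomial_term a N (Suc m) lam = fact (Suc m) / (fact (Suc j) * F) * (a k ^ Suc j * A)"
    using k j by (simp add: multinomial_term_def prod.remove F_def A_def del: fact_Suc)
  show ?thesis
    unfolding j diff_Suc_1 term_m term_Suc_m using \<open>F \<noteq> 0\<close>
    by (simp add: field_simps del: of_nat_Suc)
qed

lemma multinomial_term_Suc:
  assumes lam: "lam \<in> Pi_part_len N (Suc m) r"
  shows "(\<Sum>k\<in>{k\<in>{2..N}. 0 < lam k}. a k * multinomial_term a N m (lam(k := lam k - 1)))
       = multinomial_term a N (Suc m) lam"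
proof -
  have "of_nat (Suc m) * (\<Sum>k\<in>{k\<in>{2..N}. 0 < lam k}. a k * multinomial_term a N m (lam(k := lam k - 1)))
      = (\<Sum>k\<in>{k\<in>{2..N}. 0 < lam k}. of_nat (Suc m) * (a k * multinomial_term a N m (lam(k := lam k - 1))))"
    by (rule sum_distrib_left)
  also have "\<dots> = (\<Sum>k\<in>{k\<in>{2..N}. 0 < lam k}. of_nat (lam k) * multinomial_term a N (Suc m) lam)"
    by (intro sum.cong refl multinomial_term_remove_part) auto
  also have "\<dots> = (\<Sum>k\<in>{k\<in>{2..N}. 0 < lam k}. of_nat (lam k)) * multinomial_term a N (Suc m) lam"
    by (rule sum_distrib_right[symmetric])
  also have "(\<Sum>k\<in>{k\<in>{2..N}. 0 < lam k}. of_nat (lam k)) = (\<Sum>k=2..N. of_nat (lam k) :: 'a)"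
    by (rule sum.mono_neutral_left) auto
  also have "\<dots> = of_nat (Suc m)"
    using lam by (simp add: Pi_part_len_def flip: of_nat_sum)
  finally show ?thesis
    by (rule mult_left_cancel[THEN iffD1, rotated]) (simp del: of_nat_Suc)
qed

lemma fps_power_nth_Pi_part_len:
  fixes U :: "'a::field_char_0 fps"
  assumes U0: "U $ 0 = 0" and U1: "U $ 1 = 0" and "r \<le> N"
  shows "(U ^ m) $ r = (\<Sum>lam\<in>Pi_part_len N m r. multinomial_term (($) U) N m lam)"
  using \<open>r \<le> N\<close>
proof (induction m arbitrary: r)
  case 0
  show ?case by (simp add: Pi_part_len_0 multinomial_term_def)
next
  case (Suc m)
  have "(U ^ Suc m) $ r = (\<Sum>i=0..r. U $ i * (U ^ m) $ (r - i))"
    by (simp add: fps_mult_nth)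
  also have "\<dots> = (\<Sum>i=2..r. U $ i * (U ^ m) $ (r - i))"
    using U0 U1 by (intro sum.mono_neutral_right) (auto simp: not_le dest: less_2_cases)
  also have "\<dots> = (\<Sum>i=2..r. \<Sum>mu\<in>Pi_part_len N m (r - i). U $ i * multinomial_term (($) U) N m mu)"
    using Suc by (simp add: sum_distrib_left)
  also have "\<dots> = (\<Sum>lam\<in>Pi_part_len N (Suc m) r. multinomial_term (($) U) N (Suc m) lam)"
    by (subst sum_Pi_part_len_Suc[OF Suc.prems]) (rule sum.cong[OF refl], rule multinomial_term_Suc)
  finally show ?case .
qed

section \<open>Cumulants in terms of central moments\<close>

lemma Pi_part_len_eq: "Pi_part_len r m r = {lam \<in> Pi_part r. part_len r lam = m}"
  unfolding Pi_part_def part_len_def Pi_part_len_def by blast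

lemma part_len_le:
  assumes "lam \<in> Pi_part r"
  shows "part_len r lam \<le> r"
proof -
  have "(\<Sum>k=2..r. lam k) \<le> (\<Sum>k=2..r. k * lam k)" by (intro sum_mono) auto
  with assms show ?thesis unfolding Pi_part_def part_len_def by simp
qed

lemma Pi_part_finite: "finite (Pi_part r)"
proof -
  have "Pi_part r = (\<Union>m\<in>{0..r}. Pi_part_len r m r)"
    using part_len_le by (auto simp: Pi_part_len_eq)
  then show ?thesis by (simp add: Pi_part_len_finite)
qed

text \<open>The coefficients of \<open>fps_ln 1 = log (1 + X)\<close> are \<open>(-1)^(m-1)/m\<close>, which together with the
  multinomial coefficients of \<open>U ^ m\<close> make up \<open>part_e\<close>.\<close>

lemma fps_ln_compose_nth_Pi_part:
  fixes U :: "real fps" and g :: "nat \<Rightarrow> real"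
  assumes U0: "U $ 0 = 0" and U1: "U $ 1 = 0" and U: "\<And>k. 2 \<le> k \<Longrightarrow> U $ k = g k / fact k"
    and r: "2 \<le> r"
  shows "fact r * (fps_ln 1 oo U) $ r = (\<Sum>lam\<in>Pi_part r. part_e r lam * (\<Prod>k=2..r. g k ^ lam k))"
proof -
  let ?G = "\<lambda>lam. part_e r lam * (\<Prod>k=2..r. g k ^ lam k)"
  have group_term: "(\<Sum>lam\<in>Pi_part_len r m r. ?G lam) = fact r * (fps_ln 1 $ m * (U ^ m) $ r)" for m
  proof (cases "m = 0")
    case True
    then show ?thesis using r by (simp add: Pi_part_len_0)
  next
    case False
    have "fact r * (fps_ln 1 $ m * (U ^ m) $ r)
        = (\<Sum>lam\<in>Pi_part_len r m r. fact r * (fps_ln 1 $ m * multinomial_term (($) U) r m lam))"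
      by (simp add: fps_power_nth_Pi_part_len[OF U0 U1 order_refl] sum_distrib_left)
    also have "\<dots> = (\<Sum>lam\<in>Pi_part_len r m r. ?G lam)"
    proof (intro sum.cong refl)
      fix lam assume "lam \<in> Pi_part_len r m r"
      then have len: "part_len r lam = m" by (simp add: Pi_part_len_eq)
      have "(\<Prod>k=2..r. (U $ k) ^ lam k) = (\<Prod>k=2..r. g k ^ lam k) / (\<Prod>k=2..r. fact k ^ lam k)"
        by (simp add: U power_divide prod_dividef)
      then show "fact r * (fps_ln 1 $ m * multinomial_term (($) U) r m lam) = ?G lam"
        unfolding multinomial_term_def part_e_def part_c_def len fps_ln_nth using False
        by (simp add: field_simps)
    qed
    finally show ?thesis by simp
  qed
  have "(\<Sum>lam\<in>Pi_part r. ?G lam) = (\<Sum>m=0..r. \<Sum>lam\<in>{lam \<in> Pi_part r. part_len r lam = m}. ?G lam)"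
    using part_len_le by (intro sum.group[symmetric] Pi_part_finite) auto
  also have "\<dots> = (\<Sum>m=0..r. fact r * (fps_ln 1 $ m * (U ^ m) $ r))"
    by (simp add: group_term flip: Pi_part_len_eq)
  also have "\<dots> = fact r * (fps_ln 1 oo U) $ r"
    by (simp add: fps_compose_nth sum_distrib_left)
  finally show ?thesis by simp
qed

section \<open>Moments of an exponential family along its natural parameter\<close>

definition central_moment :: "(nat \<Rightarrow> 'a \<Rightarrow> real) \<Rightarrow> nat \<Rightarrow> 'a \<Rightarrow> real" where
  "central_moment m k y = (\<Sum>j=0..k. real (k choose j) * (- m 1 y) ^ (k - j) * m j y)"

text \<open>If \<open>m n y\<close> is the \<open>n\<close>-th moment of \<open>exp (x y) \<mu>(dx) / Z(y)\<close>, differentiating in \<open>y\<close> gives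
  these equations; they are all that is used about the moments.\<close>

locale exponential_family_moments =
  fixes m :: "nat \<Rightarrow> real \<Rightarrow> real"
  assumes moment_0 [simp]: "m 0 y = 1"
    and has_real_derivative_moment: "(m n has_real_derivative m (Suc n) y - m n y * m 1 y) (at y)"
begin

definition moment_fps :: "real \<Rightarrow> real fps" where
  "moment_fps y = Abs_fps (\<lambda>n. m n y / fact n)"

definition central_moment_fps :: "real \<Rightarrow> real fps" where
  "central_moment_fps y = moment_fps y * fps_exp (- m 1 y)"

definition cumulant_fps :: "real \<Rightarrow> real fps" where
  "cumulant_fps y = fps_ln 1 oo (central_moment_fps y - 1)"

definition cumulant :: "nat \<Rightarrow> real \<Rightarrow> real" where
  "cumulant r y = fact r * cumulant_fps y $ r"

lemma central_moment_fps_nth: "central_moment_fps y $ k = central_moment m k y / fact k"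
proof -
  have "central_moment_fps y $ k = (\<Sum>j=0..k. m j y / fact j * ((- m 1 y) ^ (k - j) / fact (k - j)))"
    by (simp add: central_moment_fps_def moment_fps_def fps_mult_nth)
  also have "\<dots> = (\<Sum>j=0..k. real (k choose j) * (- m 1 y) ^ (k - j) * m j y / fact k)"
    by (intro sum.cong refl) (simp add: binomial_fact field_simps)
  finally show ?thesis by (simp add: central_moment_def sum_divide_distrib)
qed

lemma central_moment_0: "central_moment m 0 y = 1"
  by (simp add: central_moment_def)

lemma central_moment_1: "central_moment m (Suc 0) y = 0"
  by (simp add: central_moment_def)

lemma central_moment_2: "central_moment m 2 y = m 2 y - m 1 y ^ 2"
  by (simp add: central_moment_def numeral_2_eq_2 power2_eq_square algebra_simps)

lemma has_real_derivative_mean: "(m 1 has_real_derivative central_moment m 2 y) (at y)"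
  using has_real_derivative_moment[of 1 y] unfolding central_moment_2
  by (simp add: power2_eq_square numeral_2_eq_2)

lemma has_fps_derivative_moment_fps:
  "has_fps_derivative moment_fps (fps_deriv (moment_fps y) - fps_const (m 1 y) * moment_fps y) y"
  unfolding has_fps_derivative_def
proof
  fix n
  have "fps_deriv (moment_fps y) $ n = m (Suc n) y / fact n"
    by (simp add: moment_fps_def fact_Suc field_simps del: of_nat_Suc)
  then have "(m (Suc n) y - m n y * m 1 y) / fact n = (fps_deriv (moment_fps y) - fps_const (m 1 y) * moment_fps y) $ n"
    by (simp add: moment_fps_def field_simps)
  with DERIV_cdivide[OF has_real_derivative_moment[of n y], of "fact n"]
  show "((\<lambda>y. moment_fps y $ n) has_field_derivative (fps_deriv (moment_fps y) - fps_const (m 1 y) * moment_fps y) $ n) (at y)"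
    by (simp add: moment_fps_def)
qed

lemma has_fps_derivative_exp_mean:
  "has_fps_derivative (\<lambda>y. fps_exp (- m 1 y)) (- (fps_const (central_moment m 2 y) * fps_X * fps_exp (- m 1 y))) y"
  unfolding has_fps_derivative_def
proof
  fix n
  have "((\<lambda>y. (- m 1 y) ^ n / fact n) has_real_derivative
      (of_nat n * (- m 1 y) ^ (n - 1) * (- central_moment m 2 y) / fact n)) (at y)"
    using DERIV_cdivide[OF DERIV_power[OF DERIV_minus[OF has_real_derivative_mean]], of n "fact n"]
    by (simp add: ac_simps)
  moreover have "of_nat n * (- m 1 y) ^ (n - 1) * (- central_moment m 2 y) / fact n
      = (- (fps_const (central_moment m 2 y) * fps_X * fps_exp (- m 1 y))) $ n"
    by (cases n) (simp_all add: field_simps del: of_nat_Suc)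
  ultimately show "((\<lambda>y. fps_exp (- m 1 y) $ n) has_field_derivative
      (- (fps_const (central_moment m 2 y) * fps_X * fps_exp (- m 1 y))) $ n) (at y)"
    by simp
qed

lemma has_fps_derivative_central_moment_fps:
  "has_fps_derivative central_moment_fps
     (fps_deriv (central_moment_fps y) - fps_const (central_moment m 2 y) * fps_X * central_moment_fps y) y"
proof -
  have product_rule: "has_fps_derivative (\<lambda>y. moment_fps y * fps_exp (- m 1 y))
     ((fps_deriv (moment_fps y) - fps_const (m 1 y) * moment_fps y) * fps_exp (- m 1 y)
      + moment_fps y * (- (fps_const (central_moment m 2 y) * fps_X * fps_exp (- m 1 y)))) y"
    by (rule has_fps_derivative_mult[OF has_fps_derivative_moment_fps has_fps_derivative_exp_mean])
  have derivative_eq: "(fps_deriv (moment_fps y) - fps_const (m 1 y) * moment_fps y) * fps_exp (- m 1 y)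
      + moment_fps y * (- (fps_const (central_moment m 2 y) * fps_X * fps_exp (- m 1 y)))
      = fps_deriv (central_moment_fps y) - fps_const (central_moment m 2 y) * fps_X * central_moment_fps y"
    by (simp add: central_moment_fps_def algebra_simps fps_const_neg[symmetric] del: fps_const_neg)
  show ?thesis
    using product_rule unfolding derivative_eq central_moment_fps_def[symmetric] .
qed

text \<open>Taking logarithms turns the multiplicative term of the previous lemma into an additive one.\<close>

lemma has_fps_derivative_cumulant_fps:
  "has_fps_derivative cumulant_fps (fps_deriv (cumulant_fps y) - fps_const (central_moment m 2 y) * fps_X) y"
proof -
  let ?U = "\<lambda>y. central_moment_fps y - 1"
  let ?D = "fps_deriv (central_moment_fps y) - fps_const (central_moment m 2 y) * fps_X * central_moment_fps y"
  have U0: "?U y $ 0 = 0" for y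
    by (simp add: central_moment_fps_nth central_moment_0)
  have "has_fps_derivative ?U ?D y"
    using has_fps_derivative_diff[OF has_fps_derivative_central_moment_fps has_fps_derivative_const[of 1]]
    by simp
  then have chain_rule: "has_fps_derivative cumulant_fps ((inverse (1 + fps_X) oo ?U y) * ?D) y"
    unfolding cumulant_fps_def[abs_def] using has_fps_derivative_compose[OF _ U0, where a = "fps_ln 1"]
    by (simp add: fps_ln_deriv)
  have inverse_C: "(inverse (1 + fps_X) oo ?U y) * central_moment_fps y = 1"
  proof -
    have "(inverse (1 + fps_X) * (1 + fps_X)) oo ?U y = (inverse (1 + fps_X) oo ?U y) * ((1 + fps_X) oo ?U y)"
      by (rule fps_compose_mult_distrib[OF U0])
    moreover have "inverse (1 + fps_X) * (1 + fps_X) = (1 :: real fps)"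
      by (rule inverse_mult_eq_1) simp
    ultimately show ?thesis
      using U0 by (simp add: fps_compose_add_distrib)
  qed
  have "fps_deriv (cumulant_fps y) = (inverse (1 + fps_X) oo ?U y) * fps_deriv (central_moment_fps y)"
    using fps_compose_deriv[OF U0[of y], of "fps_ln 1"] by (simp add: cumulant_fps_def fps_ln_deriv)
  then have "(inverse (1 + fps_X) oo ?U y) * ?D = fps_deriv (cumulant_fps y) - fps_const (central_moment m 2 y) * fps_X"
    using inverse_C by (simp add: algebra_simps)
  then show ?thesis
    using chain_rule by simp
qed

lemma has_real_derivative_cumulant:
  assumes "2 \<le> r"
  shows "(cumulant r has_real_derivative cumulant (Suc r) y) (at y)"
proof -
  have "((\<lambda>y. cumulant_fps y $ r) has_real_derivative
      (fps_deriv (cumulant_fps y) - fps_const (central_moment m 2 y) * fps_X) $ r) (at y)"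
    using has_fps_derivative_cumulant_fps[of y] unfolding has_fps_derivative_def by blast
  moreover have "(fps_deriv (cumulant_fps y) - fps_const (central_moment m 2 y) * fps_X) $ r
      = of_nat (Suc r) * cumulant_fps y $ Suc r"
    using assms by (simp add: mult.commute[of "fps_const _" fps_X])
  ultimately show ?thesis
    unfolding cumulant_def[abs_def] by (auto intro!: derivative_eq_intros simp: fact_Suc simp del: of_nat_Suc)
qed

lemma cumulant_2: "cumulant 2 y = central_moment m 2 y"
proof -
  have "((central_moment_fps y - 1) ^ 2) $ 2 = 0"
    by (simp add: power2_eq_square fps_mult_nth numeral_2_eq_2 sum.atLeast0_atMost_Suc
        central_moment_fps_nth central_moment_0 central_moment_1)
  then show ?thesis
    by (simp add: cumulant_def cumulant_fps_def fps_compose_nth numeral_2_eq_2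
        central_moment_fps_nth central_moment_0 fps_ln_nth)
qed

lemma higher_deriv_mean:
  "((deriv ^^ n) (m 1) has_real_derivative cumulant (n + 2) y) (at y)"
proof (induction n arbitrary: y)
  case 0
  show ?case using has_real_derivative_mean[of y] by (simp only: funpow_0 add_0 cumulant_2)
next
  case (Suc n)
  have "(deriv ^^ Suc n) (m 1) = cumulant (n + 2)"
    using Suc.IH by (auto intro!: DERIV_imp_deriv)
  then show ?case using has_real_derivative_cumulant[of "n + 2" y] by simp
qed

lemma cumulant_eq_Pi_part_sum:
  assumes "2 \<le> r"
  shows "cumulant r y = (\<Sum>lam\<in>Pi_part r. part_e r lam * (\<Prod>k=2..r. central_moment m k y ^ lam k))"
  unfolding cumulant_def cumulant_fps_def
  using assms by (intro fps_ln_compose_nth_Pi_part)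
    (simp_all add: central_moment_fps_nth central_moment_0 central_moment_1)

end

section \<open>Gaussian tilting\<close>

definition gauss_tilt :: "real \<Rightarrow> real \<Rightarrow> real" where
  "gauss_tilt x y = exp (x * y - x^2 / 2)"

definition tilted_moment :: "'a measure \<Rightarrow> ('a \<Rightarrow> real) \<Rightarrow> nat \<Rightarrow> real \<Rightarrow> real" where
  "tilted_moment M X n y = (\<integral>\<omega>. X \<omega> ^ n * gauss_tilt (X \<omega>) y \<partial>M)"

definition posterior_moment :: "'a measure \<Rightarrow> ('a \<Rightarrow> real) \<Rightarrow> nat \<Rightarrow> real \<Rightarrow> real" where
  "posterior_moment M X n y = tilted_moment M X n y / tilted_moment M X 0 y"

lemma power_le_fact_mult_exp:
  fixes t :: real
  assumes "0 \<le> t"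
  shows "t ^ k \<le> fact k * exp t"
proof -
  obtain s where "exp t = (\<Sum>m<Suc k. t ^ m / fact m) + exp s / fact (Suc k) * t ^ Suc k"
    using Maclaurin_exp_le[of t "Suc k"] by blast
  moreover have "t ^ k / fact k \<le> (\<Sum>m<Suc k. t ^ m / fact m)"
    using assms by (intro member_le_sum) auto
  ultimately have "t ^ k / fact k \<le> exp t"
    using assms by simp
  then show ?thesis by (simp add: field_simps)
qed

lemma abs_exp_minus_one_minus_le:
  fixes a :: real
  shows "\<bar>exp a - 1 - a\<bar> \<le> a^2 * exp \<bar>a\<bar>"
proof -
  obtain t where t: "\<bar>t\<bar> \<le> \<bar>a\<bar>" and "exp a = (\<Sum>m<2. a ^ m / fact m) + exp t / fact 2 * a ^ 2"
    using Maclaurin_exp_le[of a 2] by blast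
  then have "\<bar>exp a - 1 - a\<bar> = exp t / 2 * a^2"
    by (simp add: numeral_2_eq_2)
  also have "\<dots> \<le> exp \<bar>a\<bar> * a^2"
  proof (rule mult_right_mono)
    have "exp t \<le> exp \<bar>a\<bar>" using t by simp
    then show "exp t / 2 \<le> exp \<bar>a\<bar>" using exp_gt_zero[of t] by linarith
  qed simp
  finally show ?thesis by (simp add: mult.commute)
qed

lemma abs_power_mult_exp_le:
  fixes x c :: real
  assumes "0 \<le> c"
  shows "\<bar>x\<bar> ^ k * exp (c * \<bar>x\<bar> - x^2 / 2) \<le> fact k * exp ((c + 1)^2 / 2)"
proof -
  have "\<bar>x\<bar> ^ k * exp (c * \<bar>x\<bar> - x^2 / 2) \<le> fact k * exp \<bar>x\<bar> * exp (c * \<bar>x\<bar> - x^2 / 2)"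
    by (intro mult_right_mono power_le_fact_mult_exp) auto
  also have "\<dots> = fact k * exp ((c + 1) * \<bar>x\<bar> - x^2 / 2)"
    by (simp add: mult.assoc algebra_simps flip: exp_add)
  also have "\<dots> \<le> fact k * exp ((c + 1)^2 / 2)"
    using sum_power2_ge_zero[of "c + 1 - \<bar>x\<bar>" 0] by (simp add: power2_eq_square algebra_simps)
  finally show ?thesis .
qed

lemma abs_power_mult_gauss_tilt_le: "\<bar>x ^ n * gauss_tilt x y\<bar> \<le> fact n * exp ((\<bar>y\<bar> + 1)^2 / 2)"
proof -
  have "x * y \<le> \<bar>y\<bar> * \<bar>x\<bar>" by (metis abs_ge_self abs_mult mult.commute)
  then have "\<bar>x ^ n * gauss_tilt x y\<bar> \<le> \<bar>x\<bar> ^ n * exp (\<bar>y\<bar> * \<bar>x\<bar> - x^2 / 2)"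
    by (simp add: gauss_tilt_def abs_mult power_abs mult_left_mono)
  also have "\<dots> \<le> fact n * exp ((\<bar>y\<bar> + 1)^2 / 2)"
    by (rule abs_power_mult_exp_le) simp
  finally show ?thesis .
qed

lemma abs_power_mult_gauss_tilt_remainder_le:
  assumes h: "\<bar>h\<bar> \<le> 1"
  shows "\<bar>x ^ n * gauss_tilt x (y + h) - x ^ n * gauss_tilt x y - h * (x ^ Suc n * gauss_tilt x y)\<bar>
    \<le> h^2 * (fact (n + 2) * exp ((\<bar>y\<bar> + 2)^2 / 2))"
proof -
  have "gauss_tilt x (y + h) = gauss_tilt x y * exp (x * h)"
    by (simp add: gauss_tilt_def algebra_simps flip: exp_add)
  then have "x ^ n * gauss_tilt x (y + h) - x ^ n * gauss_tilt x y - h * (x ^ Suc n * gauss_tilt x y)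
      = x ^ n * gauss_tilt x y * (exp (x * h) - 1 - x * h)"
    by (simp add: algebra_simps)
  then have "\<bar>x ^ n * gauss_tilt x (y + h) - x ^ n * gauss_tilt x y - h * (x ^ Suc n * gauss_tilt x y)\<bar>
      = \<bar>x\<bar> ^ n * gauss_tilt x y * \<bar>exp (x * h) - 1 - x * h\<bar>"
    by (simp add: abs_mult power_abs gauss_tilt_def)
  also have "\<dots> \<le> \<bar>x\<bar> ^ n * gauss_tilt x y * ((x * h)^2 * exp \<bar>x\<bar>)"
  proof -
    have "exp \<bar>x * h\<bar> \<le> exp \<bar>x\<bar>" using h by (simp add: abs_mult mult_left_le)
    then have "\<bar>exp (x * h) - 1 - x * h\<bar> \<le> (x * h)^2 * exp \<bar>x\<bar>"
      using abs_exp_minus_one_minus_le[of "x * h"] by (meson order_trans mult_left_mono zero_le_power2)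
    then show ?thesis by (intro mult_left_mono) (auto simp: gauss_tilt_def)
  qed
  also have "\<dots> = h^2 * (\<bar>x\<bar> ^ (n + 2) * exp (x * y - x^2 / 2 + \<bar>x\<bar>))"
    by (simp add: gauss_tilt_def exp_add power_add power_mult_distrib mult_ac power2_eq_square)
  also have "\<dots> \<le> h^2 * (\<bar>x\<bar> ^ (n + 2) * exp ((\<bar>y\<bar> + 1) * \<bar>x\<bar> - x^2 / 2))"
  proof -
    have "x * y \<le> \<bar>y\<bar> * \<bar>x\<bar>" by (metis abs_ge_self abs_mult mult.commute)
    then show ?thesis by (intro mult_left_mono) (auto simp: algebra_simps)
  qed
  also have "\<dots> \<le> h^2 * (fact (n + 2) * exp ((\<bar>y\<bar> + 1 + 1)^2 / 2))"
    by (intro mult_left_mono abs_power_mult_exp_le) auto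
  finally show ?thesis by (simp add: add.assoc)
qed

lemma DERIV_quadratic_remainder:
  fixes F :: "real \<Rightarrow> real"
  assumes "\<And>h. \<bar>h\<bar> \<le> 1 \<Longrightarrow> \<bar>F (y + h) - F y - h * D\<bar> \<le> B * h^2"
  shows "(F has_real_derivative D) (at y)"
proof -
  have "((\<lambda>h. (F (y + h) - F y) / h - D) \<longlongrightarrow> 0) (at 0)"
  proof (rule Lim_null_comparison)
    show "\<forall>\<^sub>F h in at 0. norm ((F (y + h) - F y) / h - D) \<le> \<bar>B\<bar> * \<bar>h\<bar>"
      unfolding eventually_at
    proof (intro exI[of _ 1] conjI ballI impI)
      fix h :: real
      assume "h \<noteq> 0 \<and> dist h 0 < 1"
      then have h0: "h \<noteq> 0" and h1: "\<bar>h\<bar> \<le> 1" by auto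
      have "norm ((F (y + h) - F y) / h - D) = \<bar>F (y + h) - F y - h * D\<bar> / \<bar>h\<bar>"
        using h0 by (simp add: field_simps)
      also have "\<dots> \<le> B * h^2 / \<bar>h\<bar>"
        using assms[OF h1] by (intro divide_right_mono) auto
      also have "\<dots> = B * \<bar>h\<bar>"
        using h0 by (cases "h > 0") (auto simp: power2_eq_square field_simps)
      also have "\<dots> \<le> \<bar>B\<bar> * \<bar>h\<bar>"
        by (intro mult_right_mono) auto
      finally show "norm ((F (y + h) - F y) / h - D) \<le> \<bar>B\<bar> * \<bar>h\<bar>" .
    qed simp
    show "((\<lambda>h. \<bar>B\<bar> * \<bar>h\<bar>) \<longlongrightarrow> 0) (at 0)"
      using tendsto_mult_left[OF tendsto_rabs[OF tendsto_ident_at], of "\<bar>B\<bar>" 0 UNIV] by simp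
  qed
  then show ?thesis
    unfolding DERIV_def by (rule LIM_zero_cancel)
qed

context prob_space
begin

lemma integrable_power_mult_gauss_tilt:
  assumes [measurable]: "X \<in> borel_measurable M"
  shows "integrable M (\<lambda>\<omega>. X \<omega> ^ n * gauss_tilt (X \<omega>) y)"
proof (rule integrable_const_bound[where B = "fact n * exp ((\<bar>y\<bar> + 1)^2 / 2)"])
  show "AE \<omega> in M. norm (X \<omega> ^ n * gauss_tilt (X \<omega>) y) \<le> fact n * exp ((\<bar>y\<bar> + 1)^2 / 2)"
    using abs_power_mult_gauss_tilt_le by simp
qed (simp add: gauss_tilt_def)

lemma abs_integral_le_const:
  fixes f :: "'a \<Rightarrow> real"
  assumes "integrable M f" "AE x in M. \<bar>f x\<bar> \<le> c"
  shows "\<bar>\<integral>x. f x \<partial>M\<bar> \<le> c"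
  using integral_abs_bound order_trans integral_le_const[OF integrable_abs[OF assms(1)] assms(2)] by blast

lemma has_real_derivative_tilted_moment:
  assumes [measurable]: "X \<in> borel_measurable M"
  shows "(tilted_moment M X n has_real_derivative tilted_moment M X (Suc n) y) (at y)"
proof (rule DERIV_quadratic_remainder[where B = "fact (n + 2) * exp ((\<bar>y\<bar> + 2)^2 / 2)"])
  fix h :: real
  assume h: "\<bar>h\<bar> \<le> 1"
  define R where "R \<omega> = X \<omega> ^ n * gauss_tilt (X \<omega>) (y + h) - X \<omega> ^ n * gauss_tilt (X \<omega>) y
      - h * (X \<omega> ^ Suc n * gauss_tilt (X \<omega>) y)" for \<omega>
  have "tilted_moment M X n (y + h) - tilted_moment M X n y - h * tilted_moment M X (Suc n) y
      = (\<integral>\<omega>. R \<omega> \<partial>M)"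
    unfolding tilted_moment_def R_def
    by (simp add: integrable_power_mult_gauss_tilt del: power_Suc)
  also have "\<bar>\<dots>\<bar> \<le> h^2 * (fact (n + 2) * exp ((\<bar>y\<bar> + 2)^2 / 2))"
  proof (rule abs_integral_le_const)
    show "integrable M R"
      unfolding R_def by (intro Bochner_Integration.integrable_diff integrable_mult_right integrable_power_mult_gauss_tilt assms)
    show "AE \<omega> in M. \<bar>R \<omega>\<bar> \<le> h^2 * (fact (n + 2) * exp ((\<bar>y\<bar> + 2)^2 / 2))"
      unfolding R_def using abs_power_mult_gauss_tilt_remainder_le[OF h] by simp
  qed
  finally show "\<bar>tilted_moment M X n (y + h) - tilted_moment M X n y - h * tilted_moment M X (Suc n) y\<bar>
      \<le> fact (n + 2) * exp ((\<bar>y\<bar> + 2)^2 / 2) * h^2"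
    by (simp add: mult.commute)
qed

lemma tilted_moment_0_pos:
  assumes [measurable]: "X \<in> borel_measurable M"
  shows "0 < tilted_moment M X 0 y"
proof -
  have integrable: "integrable M (\<lambda>\<omega>. gauss_tilt (X \<omega>) y)"
    using integrable_power_mult_gauss_tilt[OF assms, of 0 y] by simp
  have "0 \<le> tilted_moment M X 0 y"
    unfolding tilted_moment_def by (intro integral_nonneg_AE) (simp add: gauss_tilt_def)
  moreover have "tilted_moment M X 0 y \<noteq> 0"
  proof
    assume "tilted_moment M X 0 y = 0"
    then have "AE \<omega> in M. gauss_tilt (X \<omega>) y = 0"
      using integral_nonneg_eq_0_iff_AE[OF integrable] by (simp add: tilted_moment_def gauss_tilt_def)
    then show False
      by (simp add: gauss_tilt_def AE_False)
  qed
  ultimately show ?thesis by simp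
qed

lemma exponential_family_moments_posterior_moment:
  assumes [measurable]: "X \<in> borel_measurable M"
  shows "exponential_family_moments (posterior_moment M X)"
proof
  fix n y
  have "tilted_moment M X 0 y \<noteq> 0"
    using tilted_moment_0_pos[OF assms] by (simp add: less_le)
  then show "posterior_moment M X 0 y = 1"
    by (simp add: posterior_moment_def)
  have "((\<lambda>y. tilted_moment M X n y / tilted_moment M X 0 y) has_real_derivative
      (tilted_moment M X (Suc n) y * tilted_moment M X 0 y - tilted_moment M X n y * tilted_moment M X (Suc 0) y)
        / (tilted_moment M X 0 y * tilted_moment M X 0 y)) (at y)"
    using \<open>tilted_moment M X 0 y \<noteq> 0\<close>
    by (intro DERIV_divide has_real_derivative_tilted_moment[OF assms, of n] has_real_derivative_tilted_moment[OF assms, of 0])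
  then show "(posterior_moment M X n has_real_derivative
      posterior_moment M X (Suc n) y - posterior_moment M X n y * posterior_moment M X 1 y) (at y)"
    using \<open>tilted_moment M X 0 y \<noteq> 0\<close> unfolding posterior_moment_def[abs_def]
    by (simp add: field_simps)
qed

lemma smooth_cexp_eq_tilted:
  assumes [measurable]: "X \<in> borel_measurable M"
  shows "smooth_cexp M X Z y = (\<integral>\<omega>. Z (X \<omega>) y * gauss_tilt (X \<omega>) y \<partial>M) / tilted_moment M X 0 y"
proof -
  have "exp (- ((x - y)^2) / 2) = gauss_tilt x y * exp (- (y^2) / 2)" for x
    by (simp add: gauss_tilt_def power2_eq_square field_simps flip: exp_add)
  then have "smooth_cexp M X Z y = ((\<integral>\<omega>. Z (X \<omega>) y * gauss_tilt (X \<omega>) y \<partial>M) * exp (- (y^2) / 2))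
        / (tilted_moment M X 0 y * exp (- (y^2) / 2))"
    unfolding smooth_cexp_def tilted_moment_def
    by (simp only: mult.assoc[symmetric] integral_mult_left_zero power_0 mult_1_left)
  then show ?thesis by simp
qed

lemma post_mean_eq_posterior_moment:
  assumes "X \<in> borel_measurable M"
  shows "post_mean M X = posterior_moment M X 1"
  by (simp add: fun_eq_iff post_mean_def smooth_cexp_eq_tilted[OF assms] posterior_moment_def tilted_moment_def)

lemma post_cmom_eq_central_moment:
  assumes [measurable]: "X \<in> borel_measurable M"
  shows "post_cmom M X k y = central_moment (posterior_moment M X) k y"
proof -
  let ?f = "posterior_moment M X 1 y"
  have "(\<integral>\<omega>. (X \<omega> - ?f) ^ k * gauss_tilt (X \<omega>) y \<partial>M)
      = (\<integral>\<omega>. (\<Sum>j=0..k. real (k choose j) * (- ?f) ^ (k - j) * (X \<omega> ^ j * gauss_tilt (X \<omega>) y)) \<partial>M)"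
  proof (intro Bochner_Integration.integral_cong refl)
    fix \<omega>
    have "(X \<omega> - ?f) ^ k = (\<Sum>j\<le>k. real (k choose j) * X \<omega> ^ j * (- ?f) ^ (k - j))"
      using binomial_ring[of "X \<omega>" "- ?f" k] by simp
    then show "(X \<omega> - ?f) ^ k * gauss_tilt (X \<omega>) y
        = (\<Sum>j=0..k. real (k choose j) * (- ?f) ^ (k - j) * (X \<omega> ^ j * gauss_tilt (X \<omega>) y))"
      by (simp add: sum_distrib_left sum_distrib_right atLeast0AtMost ac_simps)
  qed
  also have "\<dots> = (\<Sum>j=0..k. real (k choose j) * (- ?f) ^ (k - j) * tilted_moment M X j y)"
    unfolding tilted_moment_def by (simp add: integrable_power_mult_gauss_tilt)
  finally show ?thesis
    unfolding post_cmom_def smooth_cexp_eq_tilted[OF assms] post_mean_eq_posterior_moment[OF assms]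
      central_moment_def posterior_moment_def
    by (simp add: sum_divide_distrib)
qed

end

theorem proposition6p2:
  fixes P :: "'a measure" and X N :: "'a \<Rightarrow> real" and r :: nat
  assumes "prob_space P"
    and "X \<in> borel_measurable P" and "integrable P X"
    and "distributed P lborel N std_normal_density"
    and "prob_space.indep_var P borel X borel N"
    and "r \<ge> 2"
  shows "\<forall>y::real. (((deriv ^^ (r - 2)) (post_mean P X)) has_real_derivative
           (\<Sum>lam\<in>Pi_part r. part_e r lam * (\<Prod>k=2..r. post_cmom P X k y ^ lam k))) (at y)"
proof
  fix y
  interpret prob_space P by fact
  interpret exponential_family_moments "posterior_moment P X"
    using exponential_family_moments_posterior_moment[OF assms(2)] .
  have "((deriv ^^ (r - 2)) (posterior_moment P X 1) has_real_derivative cumulant r y) (at y)"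
    using higher_deriv_mean[of "r - 2" y] unfolding le_add_diff_inverse2[OF \<open>r \<ge> 2\<close>] .
  then show "((deriv ^^ (r - 2)) (post_mean P X) has_real_derivative
      (\<Sum>lam\<in>Pi_part r. part_e r lam * (\<Prod>k=2..r. post_cmom P X k y ^ lam k))) (at y)"
    using \<open>r \<ge> 2\<close>
    by (simp add: post_mean_eq_posterior_moment[OF assms(2)] post_cmom_eq_central_moment[OF assms(2)]
        cumulant_eq_Pi_part_sum)
qed

end
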